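(* Let $\varepsilon\in(0,1)$, let $z>1$ and let $m\ge 1$ be an integer. There is a deterministic streaming algorithm that receives numbers $x_1,x_2,\dots\in[0,1]$ one at a time, uses $\mathcal{O}(\log_{1/(1-\varepsilon)} z)$ space and $\mathcal{O}(1)$ time per arrival, and after the arrival of $x_q$ (for $q\ge m$) outputs either a number $v$ or "No", such that, writing $W_q=x_{q-m+1}x_{q-m+2}\cdots x_q$: if it outputs a number $v$ then $(1-\varepsilon)W_q\le v\le W_q$; and if it outputs "No" then $W_q\le (1-\varepsilon)/z$.
   Context: Space is measured in stored numbers/machine words; each input number is assumed exactly representable and multiplication/division of such numbers is exact and takes $\mathcal{O}(1)$ time. *)

theory Defs
  imports Complex_Main
begin

text \<open>A small deterministic real-RAM model of streaming algorithms.
  Memory is a list of real-valued words (the space used is its length).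
  A program is executed once per arrival; the time for an arrival is the
  number of executed instructions.  Out-of-range reads give 0, out-of-range
  writes are ignored; addresses for indirect access are floors of stored words.\<close>

datatype instr =
    Const nat real
  | Copy nat nat
  | Add nat nat nat
  | Sub nat nat nat
  | Mul nat nat nat
  | Div nat nat nat
  | Input nat
  | Load nat nat
  | Store nat nat
  | JmpLe nat nat nat
  | Jmp nat
  | HaltNum nat
  | HaltNo

datatype out = OutNum real | OutNo

definition rd :: "real list \<Rightarrow> nat \<Rightarrow> real" where
  "rd M i = (if i < length M then M ! i else 0)"

definition addr :: "real \<Rightarrow> nat" where
  "addr r = nat \<lfloor>r\<rfloor>"

fun exec :: "instr list \<Rightarrow> real \<Rightarrow> nat \<Rightarrow> nat \<Rightarrow> real list \<Rightarrow> (real list \<times> out) option" where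
  "exec P x 0 pc M = None"
| "exec P x (Suc n) pc M =
     (if pc < length P then
        (case P ! pc of
           Const i c \<Rightarrow> exec P x n (Suc pc) (M[i := c])
         | Copy i j \<Rightarrow> exec P x n (Suc pc) (M[i := rd M j])
         | Add i j k \<Rightarrow> exec P x n (Suc pc) (M[i := rd M j + rd M k])
         | Sub i j k \<Rightarrow> exec P x n (Suc pc) (M[i := rd M j - rd M k])
         | Mul i j k \<Rightarrow> exec P x n (Suc pc) (M[i := rd M j * rd M k])
         | Div i j k \<Rightarrow> exec P x n (Suc pc) (M[i := rd M j / rd M k])
         | Input i \<Rightarrow> exec P x n (Suc pc) (M[i := x])
         | Load i j \<Rightarrow> exec P x n (Suc pc) (M[i := rd M (addr (rd M j))])
         | Store i j \<Rightarrow> exec P x n (Suc pc) (M[addr (rd M i) := rd M j])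
         | JmpLe i j t \<Rightarrow> exec P x n (if rd M i \<le> rd M j then t else Suc pc) M
         | Jmp t \<Rightarrow> exec P x n t M
         | HaltNum i \<Rightarrow> Some (M, OutNum (rd M i))
         | HaltNo \<Rightarrow> Some (M, OutNo))
      else None)"

text \<open>State (memory, last output) after processing arrivals xs 1, ..., xs k,
  with time budget T per arrival, starting from initial memory M0.\<close>
fun run :: "instr list \<Rightarrow> nat \<Rightarrow> real list \<Rightarrow> (nat \<Rightarrow> real) \<Rightarrow> nat \<Rightarrow> (real list \<times> out) option" where
  "run P T M0 xs 0 = Some (M0, OutNo)"
| "run P T M0 xs (Suc k) =
     (case run P T M0 xs k of
        None \<Rightarrow> None
      | Some (M, _) \<Rightarrow> exec P (xs (Suc k)) T 0 M)"

end

theory Submission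
  imports Defs
begin

text \<open>
  Keep the product \<open>R\<close> of all inputs since the last zero, and open a checkpoint, storing the
  current time and \<open>R\<close>, whenever \<open>R\<close> has dropped by the factor \<open>\<rho> = 1 - \<epsilon>\<close> since the newest
  checkpoint.  Only the \<open>K = \<lceil>log (1/\<rho>) z\<rceil> + 2\<close> newest checkpoints are kept, in a circular
  buffer of \<open>2K\<close> memory cells.  At time \<open>q\<close> use the newest checkpoint \<open>p\<close> whose time \<open>t\<^sub>p\<close> is
  at most \<open>q - m\<close>: no checkpoint was opened between \<open>t\<^sub>p\<close> and \<open>q - m\<close>, so \<open>R / R\<^sub>p\<close>, the
  product over \<open>(t\<^sub>p, q]\<close>, lies between \<open>\<rho> W\<^sub>q\<close> and \<open>W\<^sub>q\<close>.  If no retained checkpoint is old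
  enough, then either the window contains the last zero, or it contains the \<open>K - 1\<close> checkpoints
  newer than the oldest retained one, and then \<open>W\<^sub>q \<le> \<rho> ^ (K - 1) \<le> \<rho> / z\<close>.
\<close>

section \<open>Products over segments\<close>

definition seg_prod :: "(nat \<Rightarrow> real) \<Rightarrow> nat \<Rightarrow> nat \<Rightarrow> real" where
  "seg_prod x a b = (\<Prod>i\<in>{a<..b}. x i)"

lemma seg_prod_self [simp]: "seg_prod x a a = 1"
  by (simp add: seg_prod_def)

lemma seg_prod_split: "a \<le> b \<Longrightarrow> b \<le> c \<Longrightarrow> seg_prod x a c = seg_prod x a b * seg_prod x b c"
  unfolding seg_prod_def ivl_disj_un_two(6)[symmetric]
  by (rule prod.union_disjoint) auto

lemma seg_prod_Suc: "a \<le> b \<Longrightarrow> seg_prod x a (Suc b) = seg_prod x a b * x (Suc b)"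
  using seg_prod_split[of a b "Suc b" x]
  by (simp add: seg_prod_def flip: atLeastSucAtMost_greaterThanAtMost)

lemma seg_prod_nonneg: "\<forall>i\<ge>1. 0 \<le> x i \<and> x i \<le> 1 \<Longrightarrow> 0 \<le> seg_prod x a b"
  unfolding seg_prod_def by (rule prod_nonneg) auto

lemma seg_prod_le_one: "\<forall>i\<ge>1. 0 \<le> x i \<and> x i \<le> 1 \<Longrightarrow> seg_prod x a b \<le> 1"
  unfolding seg_prod_def by (rule prod_le_1) auto

lemma seg_prod_pos: "(\<And>i. a < i \<Longrightarrow> i \<le> b \<Longrightarrow> 0 < x i) \<Longrightarrow> 0 < seg_prod x a b"
  unfolding seg_prod_def by (rule prod_pos) auto

lemma seg_prod_eq_0: "a < i \<Longrightarrow> i \<le> b \<Longrightarrow> x i = 0 \<Longrightarrow> seg_prod x a b = 0"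
  unfolding seg_prod_def by (rule prod_zero) auto

lemma seg_prod_extend_right:
  assumes "\<forall>i\<ge>1. 0 \<le> x i \<and> x i \<le> 1" "a \<le> b" "b \<le> c"
  shows "seg_prod x a c \<le> seg_prod x a b"
  using seg_prod_split[OF assms(2,3), of x] seg_prod_nonneg[OF assms(1), of a b]
    seg_prod_le_one[OF assms(1), of b c]
  by (simp add: mult_left_le)

lemma seg_prod_extend_left:
  assumes "\<forall>i\<ge>1. 0 \<le> x i \<and> x i \<le> 1" "a \<le> b" "b \<le> c"
  shows "seg_prod x a c \<le> seg_prod x b c"
  using seg_prod_split[OF assms(2,3), of x] seg_prod_nonneg[OF assms(1)]
    seg_prod_le_one[OF assms(1), of a b]
  by (simp add: mult_left_le_one_le)

lemma decay_chain:
  fixes v :: "nat \<Rightarrow> real"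
  assumes "\<And>j. a \<le> j \<Longrightarrow> j < b \<Longrightarrow> v (Suc j) \<le> v j * \<rho>" "0 \<le> \<rho>" "a + k \<le> b"
  shows "v (a + k) \<le> v a * \<rho> ^ k"
  using assms(3)
proof (induction k)
  case (Suc k)
  then have "v (a + Suc k) \<le> v (a + k) * \<rho>" using assms(1) by simp
  also have "\<dots> \<le> v a * \<rho> ^ k * \<rho>" using Suc assms(2) by (simp add: mult_right_mono)
  finally show ?case by (simp add: ac_simps)
qed simp

section \<open>The checkpoint algorithm\<close>

text \<open>In this abstract version checkpoints are numbered consecutively and never discarded; the
  circular buffer of the next section stores only the last \<open>K\<close> of them.  \<open>origin\<close> is the
  checkpoint opened at the last zero (or at time 0) and \<open>cur\<close> the one used for the output.\<close>

record wstate =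
  clock :: nat
  acc :: real
  origin :: nat
  newest :: nat
  cur :: nat
  ck_time :: "nat \<Rightarrow> nat"
  ck_val :: "nat \<Rightarrow> real"

definition tick :: "wstate \<Rightarrow> real \<Rightarrow> wstate" where
  "tick s y = s\<lparr>clock := Suc (clock s), acc := acc s * y\<rparr>"

definition restart :: "wstate \<Rightarrow> wstate" where
  "restart s = (let q = Suc (clock s); N = Suc (newest s) in
     s\<lparr>clock := q, acc := 1, origin := N, newest := N, cur := N,
       ck_time := (ck_time s)(N := q), ck_val := (ck_val s)(N := 1)\<rparr>)"

definition push :: "nat \<Rightarrow> wstate \<Rightarrow> wstate" where
  "push K s = (let N = Suc (newest s) in
     s\<lparr>newest := N, cur := (if K \<le> N - cur s then Suc (cur s) else cur s),
       ck_time := (ck_time s)(N := clock s), ck_val := (ck_val s)(N := acc s)\<rparr>)"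

definition advance :: "nat \<Rightarrow> wstate \<Rightarrow> wstate" where
  "advance m s =
     (if cur s < newest s \<and> ck_time s (Suc (cur s)) + m \<le> clock s then s\<lparr>cur := Suc (cur s)\<rparr> else s)"

definition wstep :: "nat \<Rightarrow> real \<Rightarrow> nat \<Rightarrow> wstate \<Rightarrow> real \<Rightarrow> wstate" where
  "wstep K \<rho> m s y =
     (if y \<le> 0 then restart s
      else let s' = tick s y in
        advance m (if acc s' \<le> ck_val s (newest s) * \<rho> then push K s' else s'))"

definition wout :: "nat \<Rightarrow> wstate \<Rightarrow> out" where
  "wout m s =
     (if ck_time s (cur s) + m \<le> clock s then OutNum (acc s / ck_val s (cur s)) else OutNo)"

definition winit :: wstate where
  "winit = \<lparr>clock = 0, acc = 1, origin = 0, newest = 0, cur = 0, ck_time = \<lambda>_. 0, ck_val = \<lambda>_. 1\<rparr>"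

primrec wrun :: "nat \<Rightarrow> real \<Rightarrow> nat \<Rightarrow> (nat \<Rightarrow> real) \<Rightarrow> nat \<Rightarrow> wstate" where
  "wrun K \<rho> m x 0 = winit"
| "wrun K \<rho> m x (Suc q) = wstep K \<rho> m (wrun K \<rho> m x q) (x (Suc q))"

lemma tick_simps [simp]:
  "clock (tick s y) = Suc (clock s)" "acc (tick s y) = acc s * y"
  "origin (tick s y) = origin s" "newest (tick s y) = newest s" "cur (tick s y) = cur s"
  "ck_time (tick s y) = ck_time s" "ck_val (tick s y) = ck_val s"
  by (simp_all add: tick_def)

lemma push_simps [simp]:
  "clock (push K s) = clock s" "acc (push K s) = acc s" "origin (push K s) = origin s"
  "newest (push K s) = Suc (newest s)"
  "ck_time (push K s) = (ck_time s)(Suc (newest s) := clock s)"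
  "ck_val (push K s) = (ck_val s)(Suc (newest s) := acc s)"
  by (simp_all add: push_def Let_def)

lemma clock_wstep [simp]: "clock (wstep K \<rho> m s y) = Suc (clock s)"
  by (simp add: wstep_def restart_def advance_def Let_def)

lemma clock_wrun [simp]: "clock (wrun K \<rho> m x q) = q"
  by (induction q) (simp_all add: winit_def)

text \<open>The last conjunct says that no checkpoint was missed: up to the time of the next
  checkpoint, the running product stays above \<open>\<rho>\<close> times the value of the previous one.\<close>

definition checkpoints_inv :: "real \<Rightarrow> (nat \<Rightarrow> real) \<Rightarrow> wstate \<Rightarrow> bool" where
  "checkpoints_inv \<rho> x s \<longleftrightarrow>
     (let q = clock s; r = origin s; N = newest s; t = ck_time s; v = ck_val s; z = t r in
       r \<le> N \<and> z \<le> q \<and> (0 < z \<longrightarrow> x z = 0) \<and> (\<forall>i. z < i \<and> i \<le> q \<longrightarrow> 0 < x i) \<and>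
       acc s = seg_prod x z q \<and>
       (\<forall>j. r \<le> j \<and> j \<le> N \<longrightarrow> v j = seg_prod x z (t j) \<and> t j \<le> q) \<and>
       (\<forall>j. r \<le> j \<and> j < N \<longrightarrow> t j < t (Suc j) \<and> v (Suc j) \<le> v j * \<rho>) \<and>
       (\<forall>j u. r \<le> j \<and> j \<le> N \<and> t j \<le> u \<and> u \<le> q \<and> (j < N \<longrightarrow> u < t (Suc j)) \<longrightarrow>
          v j * \<rho> < seg_prod x z u))"

text \<open>\<open>cur\<close> is the newest checkpoint at least \<open>m\<close> steps older than the reference time \<open>q\<close>;
  if even \<open>cur\<close> is too young, it is the origin or the oldest checkpoint of a full buffer.\<close>

definition pointer_inv :: "nat \<Rightarrow> nat \<Rightarrow> nat \<Rightarrow> wstate \<Rightarrow> bool" where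
  "pointer_inv K m q s \<longleftrightarrow>
     origin s \<le> cur s \<and> cur s \<le> newest s \<and> newest s - cur s < K \<and>
     (cur s < newest s \<longrightarrow> q < ck_time s (Suc (cur s)) + m) \<and>
     (q < ck_time s (cur s) + m \<longrightarrow> cur s = origin s \<or> Suc (newest s - cur s) = K)"

definition window_inv :: "nat \<Rightarrow> real \<Rightarrow> nat \<Rightarrow> (nat \<Rightarrow> real) \<Rightarrow> wstate \<Rightarrow> bool" where
  "window_inv K \<rho> m x s \<longleftrightarrow> checkpoints_inv \<rho> x s \<and> pointer_inv K m (clock s) s"

lemma checkpoints_invD:
  assumes "checkpoints_inv \<rho> x s"
  defines "z \<equiv> ck_time s (origin s)"
  shows "origin s \<le> newest s" and "z \<le> clock s" and "0 < z \<Longrightarrow> x z = 0"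
    and "z < i \<Longrightarrow> i \<le> clock s \<Longrightarrow> 0 < x i"
    and "acc s = seg_prod x z (clock s)"
    and "origin s \<le> j \<Longrightarrow> j \<le> newest s \<Longrightarrow> ck_val s j = seg_prod x z (ck_time s j)"
    and "origin s \<le> j \<Longrightarrow> j \<le> newest s \<Longrightarrow> ck_time s j \<le> clock s"
    and "origin s \<le> j \<Longrightarrow> j < newest s \<Longrightarrow> ck_time s j < ck_time s (Suc j)"
    and "origin s \<le> j \<Longrightarrow> j < newest s \<Longrightarrow> ck_val s (Suc j) \<le> ck_val s j * \<rho>"
    and "origin s \<le> j \<Longrightarrow> j \<le> newest s \<Longrightarrow> ck_time s j \<le> u \<Longrightarrow> u \<le> clock s \<Longrightarrow>
      (j < newest s \<Longrightarrow> u < ck_time s (Suc j)) \<Longrightarrow> ck_val s j * \<rho> < seg_prod x z u"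
  using assms unfolding checkpoints_inv_def Let_def by auto

lemma checkpoints_inv_origin_le:
  assumes "checkpoints_inv \<rho> x s" "origin s \<le> j" "j \<le> newest s"
  shows "ck_time s (origin s) \<le> ck_time s j"
  using lift_Suc_mono_le_ivl[of "{origin s..<newest s}" "ck_time s" "origin s" j]
    checkpoints_invD(8)[OF assms(1)] assms(2,3)
  by (force intro: less_imp_le)

lemma checkpoints_inv_advance [simp]: "checkpoints_inv \<rho> x (advance m s) = checkpoints_inv \<rho> x s"
  by (simp add: checkpoints_inv_def advance_def Let_def)

lemma checkpoints_inv_restart:
  assumes "x (Suc (clock s)) = 0" "\<rho> < 1"
  shows "checkpoints_inv \<rho> x (restart s)"
proof -
  have "j = Suc (newest s)" if "Suc (newest s) \<le> j" "j \<le> Suc (newest s)" for j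
    using that by simp
  moreover have "u = Suc (clock s)" if "Suc (clock s) \<le> u" "u \<le> Suc (clock s)" for u
    using that by simp
  ultimately show ?thesis using assms by (auto simp: checkpoints_inv_def restart_def Let_def)
qed

lemma tick_seg_prod:
  assumes inv: "checkpoints_inv \<rho> x s" and y: "y = x (Suc (clock s))" "0 < y"
  defines "z \<equiv> ck_time s (origin s)"
  shows "acc s * y = seg_prod x z (Suc (clock s))"
    and "\<forall>i. z < i \<and> i \<le> Suc (clock s) \<longrightarrow> 0 < x i"
  using checkpoints_invD(2,4,5)[OF inv] y seg_prod_Suc[of z "clock s" x]
  by (auto simp: z_def le_Suc_eq)

lemma checkpoints_inv_tick:
  assumes inv: "checkpoints_inv \<rho> x s" and y: "y = x (Suc (clock s))" "0 < y"
    and above: "ck_val s (newest s) * \<rho> < acc s * y"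
  shows "checkpoints_inv \<rho> x (tick s y)"
proof -
  define z where "z = ck_time s (origin s)"
  have "ck_val s j * \<rho> < seg_prod x z u"
    if "origin s \<le> j" "j \<le> newest s" "ck_time s j \<le> u" "u \<le> Suc (clock s)"
       "j < newest s \<longrightarrow> u < ck_time s (Suc j)" for j u
  proof (cases "u = Suc (clock s)")
    case True
    then have "j = newest s"
      using that checkpoints_invD(7)[OF inv, of "Suc j"] by fastforce
    then show ?thesis
      using True above tick_seg_prod(1)[OF inv y] by (simp add: z_def)
  next
    case False
    then show ?thesis
      using that checkpoints_invD(10)[OF inv] by (simp add: z_def)
  qed
  then show ?thesis
    using inv tick_seg_prod[OF inv y]
    unfolding checkpoints_inv_def Let_def tick_simps z_def[symmetric]
    by (auto simp: le_Suc_eq)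
qed

lemma checkpoints_inv_tick_push:
  assumes inv: "checkpoints_inv \<rho> x s" and y: "y = x (Suc (clock s))" "0 < y"
    and below: "acc s * y \<le> ck_val s (newest s) * \<rho>" and "\<rho> < 1"
  shows "checkpoints_inv \<rho> x (push K (tick s y))"
proof -
  define z where "z = ck_time s (origin s)"
  define s' where "s' = push K (tick s y)"
  have sel: "clock s' = Suc (clock s)" "acc s' = acc s * y" "origin s' = origin s"
    "newest s' = Suc (newest s)" "ck_time s' = (ck_time s)(Suc (newest s) := Suc (clock s))"
    "ck_val s' = (ck_val s)(Suc (newest s) := acc s * y)"
    by (simp_all add: s'_def)
  note old = checkpoints_invD[OF inv, folded z_def]
  note acc' = tick_seg_prod(1)[OF inv y, folded z_def]
  note pos' = tick_seg_prod(2)[OF inv y, folded z_def]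
  have z': "ck_time s' (origin s') = z"
    using old(1) by (simp add: sel z_def)
  have acc_pos: "0 < acc s * y"
    using acc' pos' by (simp add: seg_prod_pos)
  have above: "ck_val s' j * \<rho> < seg_prod x z u"
    if "origin s' \<le> j" "j \<le> newest s'" "ck_time s' j \<le> u" "u \<le> clock s'"
       "j < newest s' \<longrightarrow> u < ck_time s' (Suc j)" for j u
  proof (cases "j = newest s'")
    case True
    then have "u = clock s'" using that by (simp add: sel)
    then show ?thesis using True acc' acc_pos \<open>\<rho> < 1\<close> by (simp add: sel)
  next
    case False
    then have "j \<le> newest s" "u \<le> clock s" "j < newest s \<Longrightarrow> u < ck_time s (Suc j)"
      using that old(7)[of "Suc j"] by (auto simp: sel split: if_splits)
    then show ?thesis using that old(10) by (simp add: sel)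
  qed
  have "ck_val s' j = seg_prod x z (ck_time s' j) \<and> ck_time s' j \<le> clock s'"
    if "origin s' \<le> j" "j \<le> newest s'" for j
    using that old(6,7)[of j] acc' by (auto simp: sel le_Suc_eq)
  moreover have "ck_time s' j < ck_time s' (Suc j) \<and> ck_val s' (Suc j) \<le> ck_val s' j * \<rho>"
    if "origin s' \<le> j" "j < newest s'" for j
    using that old(7,8,9)[of j] below by (auto simp: sel less_Suc_eq)
  moreover have "origin s' \<le> newest s'" "z \<le> clock s'" "acc s' = seg_prod x z (clock s')"
    "\<forall>i. z < i \<and> i \<le> clock s' \<longrightarrow> 0 < x i"
    using old(1,2) acc' pos' by (simp_all add: sel)
  ultimately show ?thesis
    unfolding s'_def[symmetric] checkpoints_inv_def Let_def z'
    using old(3) above by blast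
qed

lemma pointer_inv_push:
  assumes ptr: "pointer_inv K m q s" and later: "q < clock s"
    and incr: "\<And>j. origin s \<le> j \<Longrightarrow> j < newest s \<Longrightarrow> ck_time s j < ck_time s (Suc j)"
  shows "pointer_inv K m q (push K s)"
proof (cases "K \<le> Suc (newest s) - cur s")
  case True
  then have "cur s < newest s \<longrightarrow> Suc (Suc (cur s)) \<le> newest s \<longrightarrow>
      ck_time s (Suc (cur s)) < ck_time s (Suc (Suc (cur s)))"
    using ptr incr[of "Suc (cur s)"] by (auto simp: pointer_inv_def)
  with True show ?thesis using ptr later
    by (auto simp: pointer_inv_def push_def Let_def le_Suc_eq)
next
  case False
  then show ?thesis using ptr later by (auto simp: pointer_inv_def push_def Let_def)
qed

lemma pointer_inv_advance:
  assumes ptr: "pointer_inv K m q s" and now: "clock s = Suc q"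
    and incr: "\<And>j. origin s \<le> j \<Longrightarrow> j < newest s \<Longrightarrow> ck_time s j < ck_time s (Suc j)"
  shows "pointer_inv K m (Suc q) (advance m s)"
proof (cases "cur s < newest s \<and> ck_time s (Suc (cur s)) + m \<le> clock s")
  case True
  then have "Suc (cur s) < newest s \<longrightarrow> ck_time s (Suc (cur s)) < ck_time s (Suc (Suc (cur s)))"
    using ptr incr[of "Suc (cur s)"] by (auto simp: pointer_inv_def)
  with True show ?thesis using ptr now by (auto simp: pointer_inv_def advance_def)
next
  case False
  then show ?thesis using ptr now by (auto simp: pointer_inv_def advance_def)
qed

lemma window_inv_wstep:
  assumes inv: "window_inv K \<rho> m x s" and y: "y = x (Suc (clock s))" "0 \<le> y"
    and "\<rho> < 1" "0 < K"
  shows "window_inv K \<rho> m x (wstep K \<rho> m s y)"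
proof (cases "y \<le> 0")
  case True
  then show ?thesis
    using y \<open>\<rho> < 1\<close> \<open>0 < K\<close> checkpoints_inv_restart[of x s \<rho>]
    by (simp add: window_inv_def wstep_def pointer_inv_def restart_def Let_def)
next
  case False
  define s' where "s' = tick s y"
  define s'' where "s'' = (if acc s' \<le> ck_val s (newest s) * \<rho> then push K s' else s')"
  have step: "wstep K \<rho> m s y = advance m s''"
    using False by (simp add: wstep_def s'_def s''_def)
  have ck: "checkpoints_inv \<rho> x s''"
    using checkpoints_inv_tick_push[of \<rho> x s y K] checkpoints_inv_tick[of \<rho> x s y] inv y False
      \<open>\<rho> < 1\<close>
    by (auto simp: s''_def s'_def window_inv_def)
  have "pointer_inv K m (clock s) s''"
    using pointer_inv_push[of K m "clock s" s'] inv checkpoints_invD(8)[of \<rho> x s]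
    by (auto simp: s''_def s'_def window_inv_def pointer_inv_def)
  then have "pointer_inv K m (Suc (clock s)) (advance m s'')"
    using pointer_inv_advance checkpoints_invD(8)[OF ck] by (simp add: s''_def s'_def)
  then show ?thesis
    using ck step clock_wstep[of K \<rho> m s y] by (simp add: window_inv_def)
qed

lemma window_inv_wrun:
  assumes "\<forall>i\<ge>1. 0 \<le> x i \<and> x i \<le> 1" "\<rho> < 1" "0 < K"
  shows "window_inv K \<rho> m x (wrun K \<rho> m x q)"
proof (induction q)
  case 0
  then show ?case
    using assms by (simp add: window_inv_def checkpoints_inv_def pointer_inv_def winit_def)
next
  case (Suc q)
  then show ?case using window_inv_wstep[of K \<rho> m x "wrun K \<rho> m x q"] assms by simp
qed

lemma wout_num_bounds:
  assumes inv: "window_inv K \<rho> m x s" and bnd: "\<forall>i\<ge>1. 0 \<le> x i \<and> x i \<le> 1"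
    and usable: "ck_time s (cur s) + m \<le> clock s"
  defines "W \<equiv> seg_prod x (clock s - m) (clock s)"
  shows "\<rho> * W \<le> acc s / ck_val s (cur s)" and "acc s / ck_val s (cur s) \<le> W"
proof -
  define z where "z = ck_time s (origin s)"
  define u where "u = clock s - m"
  define V where "V = ck_val s (cur s)"
  have ck: "checkpoints_inv \<rho> x s" and ptr: "origin s \<le> cur s" "cur s \<le> newest s"
    "cur s < newest s \<Longrightarrow> clock s < ck_time s (Suc (cur s)) + m"
    using inv by (auto simp: window_inv_def pointer_inv_def)
  have z_tp: "z \<le> ck_time s (cur s)"
    unfolding z_def using checkpoints_inv_origin_le[OF ck ptr(1,2)] .
  have tp_u: "ck_time s (cur s) \<le> u" "u \<le> clock s"
    using usable by (auto simp: u_def)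
  have acc_eq: "acc s = seg_prod x z u * W"
    using checkpoints_invD(5)[OF ck] seg_prod_split[of z u "clock s" x] z_tp tp_u
    by (simp add: z_def W_def u_def)
  have pos: "0 < seg_prod x z u"
    using checkpoints_invD(4)[OF ck] tp_u by (intro seg_prod_pos) (simp add: z_def)
  have "cur s < newest s \<Longrightarrow> u < ck_time s (Suc (cur s))"
    using ptr(3) usable by (auto simp: u_def)
  then have below: "V * \<rho> < seg_prod x z u"
    using checkpoints_invD(10)[OF ck ptr(1,2) tp_u(1,2)] by (simp add: z_def V_def)
  have above: "seg_prod x z u \<le> V"
    using checkpoints_invD(6)[OF ck ptr(1,2)] seg_prod_extend_right[OF bnd z_tp tp_u(1)]
    by (simp add: z_def V_def)
  have W_nonneg: "0 \<le> W"
    unfolding W_def using bnd by (rule seg_prod_nonneg)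
  have ratio: "\<rho> \<le> seg_prod x z u / V" "seg_prod x z u / V \<le> 1"
    using below above pos by (simp_all add: pos_le_divide_eq mult.commute)
  have eq: "acc s / V = W * (seg_prod x z u / V)"
    by (simp add: acc_eq)
  show "\<rho> * W \<le> acc s / ck_val s (cur s)"
    unfolding V_def[symmetric] eq mult.commute[of \<rho>] by (rule mult_left_mono[OF ratio(1) W_nonneg])
  show "acc s / ck_val s (cur s) \<le> W"
    unfolding V_def[symmetric] eq using mult_left_mono[OF ratio(2) W_nonneg] by simp
qed

lemma wout_no_bound:
  assumes inv: "window_inv K \<rho> m x s" and bnd: "\<forall>i\<ge>1. 0 \<le> x i \<and> x i \<le> 1" and "0 \<le> \<rho>"
    and m_le: "m \<le> clock s" and unusable: "clock s < ck_time s (cur s) + m"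
  shows "seg_prod x (clock s - m) (clock s) \<le> \<rho> ^ (K - 1)"
proof -
  define z where "z = ck_time s (origin s)"
  define u where "u = clock s - m"
  define tp where "tp = ck_time s (cur s)"
  have ck: "checkpoints_inv \<rho> x s" and ptr: "origin s \<le> cur s" "cur s \<le> newest s"
    and full_or_origin: "cur s = origin s \<or> Suc (newest s - cur s) = K"
    using inv unusable by (auto simp: window_inv_def pointer_inv_def)
  have u_tp: "u < tp"
    using unusable m_le by (simp add: u_def tp_def)
  have tp_le: "tp \<le> clock s"
    using checkpoints_invD(7)[OF ck ptr] by (simp add: tp_def)
  from full_or_origin show ?thesis
  proof
    assume "cur s = origin s"
    then have "0 < z" "z \<le> clock s" "u < z"
      using u_tp tp_le by (simp_all add: z_def tp_def)
    then have "seg_prod x u (clock s) = 0"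
      using checkpoints_invD(3)[OF ck] by (intro seg_prod_eq_0[of u z]) (simp_all add: z_def)
    then show ?thesis
      using \<open>0 \<le> \<rho>\<close> by (simp add: u_def)
  next
    assume full: "Suc (newest s - cur s) = K"
    define V where "V = ck_val s (cur s)"
    have z_tp: "z \<le> tp"
      unfolding z_def tp_def using checkpoints_inv_origin_le[OF ck ptr] .
    have V_eq: "V = seg_prod x z tp"
      using checkpoints_invD(6)[OF ck ptr] by (simp add: V_def z_def tp_def)
    have V_pos: "0 < V"
      unfolding V_eq using checkpoints_invD(4)[OF ck] tp_le by (intro seg_prod_pos) (simp add: z_def)
    have "V * seg_prod x tp (clock s) = acc s"
      using checkpoints_invD(5)[OF ck] seg_prod_split[OF z_tp tp_le] by (simp add: V_eq z_def)
    also have "\<dots> \<le> ck_val s (newest s)"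
      using checkpoints_invD(5,6)[OF ck] checkpoints_invD(7)[OF ck _ order_refl]
        seg_prod_extend_right[OF bnd checkpoints_inv_origin_le[OF ck _ order_refl]]
        checkpoints_invD(1)[OF ck]
      by (simp add: z_def)
    also have "ck_val s (newest s) \<le> V * \<rho> ^ (newest s - cur s)"
      using decay_chain[of "cur s" "newest s" "ck_val s" \<rho> "newest s - cur s"]
        checkpoints_invD(9)[OF ck] ptr \<open>0 \<le> \<rho>\<close>
      by (simp add: V_def)
    finally have "seg_prod x tp (clock s) \<le> \<rho> ^ (K - 1)"
      using V_pos full[symmetric] by simp
    moreover have "seg_prod x u (clock s) \<le> seg_prod x tp (clock s)"
      using seg_prod_extend_left[OF bnd] u_tp tp_le by simp
    ultimately show ?thesis
      by (simp add: u_def)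
  qed
qed


lemma wout_wrun:
  assumes bnd: "\<forall>i\<ge>1. 0 \<le> x i \<and> x i \<le> 1" and "0 \<le> \<rho>" "\<rho> < 1" "0 < K" "m \<le> q"
  defines "W \<equiv> seg_prod x (q - m) q"
  shows "case wout m (wrun K \<rho> m x q) of
      OutNum v \<Rightarrow> \<rho> * W \<le> v \<and> v \<le> W
    | OutNo \<Rightarrow> W \<le> \<rho> ^ (K - 1)"
proof -
  define s where "s = wrun K \<rho> m x q"
  have inv: "window_inv K \<rho> m x s" and q: "clock s = q"
    using window_inv_wrun[OF bnd \<open>\<rho> < 1\<close> \<open>0 < K\<close>] by (simp_all add: s_def)
  show ?thesis
    using wout_num_bounds[OF inv bnd] wout_no_bound[OF inv bnd \<open>0 \<le> \<rho>\<close>] \<open>m \<le> q\<close>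
    unfolding s_def[symmetric] W_def by (auto simp: wout_def not_le q)
qed

section \<open>A circular buffer of checkpoints\<close>

record bstate =
  b_clock :: nat
  b_acc :: real
  b_newest :: nat
  b_cur :: nat
  b_gap :: nat
  b_time :: "nat \<Rightarrow> real"
  b_val :: "nat \<Rightarrow> real"

definition next_slot :: "nat \<Rightarrow> nat \<Rightarrow> nat" where
  "next_slot K i = (if Suc i = K then 0 else Suc i)"

lemma next_slot_mod: "0 < K \<Longrightarrow> next_slot K (n mod K) = Suc n mod K"
  by (simp add: next_slot_def mod_Suc)

lemma mod_neq_of_lt_add:
  fixes j n K :: nat
  assumes "j < n" "n < j + K"
  shows "j mod K \<noteq> n mod K"
proof
  assume "j mod K = n mod K"
  then have "K dvd n - j"
    using mod_eq_dvd_iff_nat[of j n K] assms by simp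
  moreover have "0 < n - j" "n - j < K"
    using assms by auto
  ultimately show False
    using dvd_imp_le by fastforce
qed

definition b_tick :: "bstate \<Rightarrow> real \<Rightarrow> bstate" where
  "b_tick b y = b\<lparr>b_clock := Suc (b_clock b), b_acc := b_acc b * y\<rparr>"

definition b_restart :: "nat \<Rightarrow> bstate \<Rightarrow> bstate" where
  "b_restart K b = (let q = Suc (b_clock b); i = next_slot K (b_newest b) in
     b\<lparr>b_clock := q, b_acc := 1, b_newest := i, b_cur := i, b_gap := 0,
       b_time := (b_time b)(i := real q), b_val := (b_val b)(i := 1)\<rparr>)"

definition b_push :: "nat \<Rightarrow> bstate \<Rightarrow> bstate" where
  "b_push K b = (let i = next_slot K (b_newest b); full = K \<le> Suc (b_gap b) in
     b\<lparr>b_newest := i, b_cur := (if full then next_slot K (b_cur b) else b_cur b),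
       b_gap := (if full then b_gap b else Suc (b_gap b)),
       b_time := (b_time b)(i := real (b_clock b)), b_val := (b_val b)(i := b_acc b)\<rparr>)"

definition b_advance :: "nat \<Rightarrow> nat \<Rightarrow> bstate \<Rightarrow> bstate" where
  "b_advance K m b =
     (if 1 \<le> b_gap b \<and> b_time b (next_slot K (b_cur b)) + real m \<le> real (b_clock b)
      then b\<lparr>b_cur := next_slot K (b_cur b), b_gap := b_gap b - 1\<rparr> else b)"

definition bstep :: "nat \<Rightarrow> real \<Rightarrow> nat \<Rightarrow> bstate \<Rightarrow> real \<Rightarrow> bstate" where
  "bstep K \<rho> m b y =
     (if y \<le> 0 then b_restart K b
      else let b' = b_tick b y in
        b_advance K m (if b_acc b' \<le> b_val b (b_newest b) * \<rho> then b_push K b' else b'))"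

definition bout :: "nat \<Rightarrow> bstate \<Rightarrow> out" where
  "bout m b =
     (if b_time b (b_cur b) + real m \<le> real (b_clock b) then OutNum (b_acc b / b_val b (b_cur b))
      else OutNo)"

definition buffer_holds :: "nat \<Rightarrow> nat \<Rightarrow> (nat \<Rightarrow> 'a) \<Rightarrow> (nat \<Rightarrow> 'a) \<Rightarrow> bool" where
  "buffer_holds K N f g \<longleftrightarrow> (\<forall>j\<le>N. N < j + K \<longrightarrow> f (j mod K) = g j)"

lemma buffer_holds_update:
  assumes "buffer_holds K N f g"
  shows "buffer_holds K (Suc N) (f(Suc N mod K := c)) (g(Suc N := c))"
  using assms mod_neq_of_lt_add[of _ "Suc N" K] by (auto simp: buffer_holds_def le_Suc_eq)

lemma buffer_holdsD: "buffer_holds K N f g \<Longrightarrow> j \<le> N \<Longrightarrow> N - j < K \<Longrightarrow> f (j mod K) = g j"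
  by (simp add: buffer_holds_def less_diff_conv2)

definition refines :: "nat \<Rightarrow> bstate \<Rightarrow> wstate \<Rightarrow> bool" where
  "refines K b s \<longleftrightarrow>
     cur s \<le> newest s \<and> newest s - cur s < K \<and>
     b_clock b = clock s \<and> b_acc b = acc s \<and> b_newest b = newest s mod K \<and>
     b_cur b = cur s mod K \<and> b_gap b = newest s - cur s \<and>
     buffer_holds K (newest s) (b_time b) (real \<circ> ck_time s) \<and>
     buffer_holds K (newest s) (b_val b) (ck_val s)"

lemma refines_tick: "refines K b s \<Longrightarrow> refines K (b_tick b y) (tick s y)"
  by (simp add: refines_def b_tick_def)

lemma refines_restart:
  assumes ref: "refines K b s"
  shows "refines K (b_restart K b) (restart s)"
proof -
  have "0 < K" using ref by (simp add: refines_def)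
  then have slot: "next_slot K (b_newest b) = Suc (newest s) mod K"
    using ref by (simp add: refines_def next_slot_mod)
  have "buffer_holds K (Suc (newest s))
      ((b_time b)(Suc (newest s) mod K := real (Suc (clock s))))
      (real \<circ> (ck_time s)(Suc (newest s) := Suc (clock s)))"
    "buffer_holds K (Suc (newest s)) ((b_val b)(Suc (newest s) mod K := 1)) ((ck_val s)(Suc (newest s) := 1))"
    unfolding fun_upd_comp using ref by (simp_all add: refines_def buffer_holds_update)
  then show ?thesis
    using ref \<open>0 < K\<close>
    unfolding refines_def b_restart_def restart_def Let_def slot by simp
qed

lemma refines_push:
  assumes ref: "refines K b s"
  shows "refines K (b_push K b) (push K s)"
proof -
  have "0 < K" using ref by (simp add: refines_def)
  then have slot: "next_slot K (b_newest b) = Suc (newest s) mod K"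
    "next_slot K (b_cur b) = Suc (cur s) mod K"
    using ref by (simp_all add: refines_def next_slot_mod)
  have "buffer_holds K (Suc (newest s))
      ((b_time b)(Suc (newest s) mod K := real (clock s)))
      (real \<circ> (ck_time s)(Suc (newest s) := clock s))"
    "buffer_holds K (Suc (newest s)) ((b_val b)(Suc (newest s) mod K := acc s))
      ((ck_val s)(Suc (newest s) := acc s))"
    unfolding fun_upd_comp using ref by (simp_all add: refines_def buffer_holds_update)
  moreover have "Suc (newest s) - cur s = Suc (b_gap b)"
    using ref by (simp add: refines_def Suc_diff_le)
  ultimately show ?thesis
    using ref unfolding refines_def b_push_def push_def Let_def slot
    by (cases "K \<le> Suc (b_gap b)") auto
qed

lemma refines_advance:
  assumes ref: "refines K b s"
  shows "refines K (b_advance K m b) (advance m s)"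
proof -
  have "0 < K" using ref by (simp add: refines_def)
  then have slot: "next_slot K (b_cur b) = Suc (cur s) mod K"
    using ref by (simp add: refines_def next_slot_mod)
  have "b_time b (Suc (cur s) mod K) = real (ck_time s (Suc (cur s)))" if "cur s < newest s"
    using ref that buffer_holdsD[of K "newest s" "b_time b" "real \<circ> ck_time s" "Suc (cur s)"]
    by (auto simp: refines_def)
  then have "(1 \<le> b_gap b \<and> b_time b (next_slot K (b_cur b)) + real m \<le> real (b_clock b)) \<longleftrightarrow>
      (cur s < newest s \<and> ck_time s (Suc (cur s)) + m \<le> clock s)"
    using ref slot by (auto simp: refines_def simp flip: of_nat_add)
  then show ?thesis
    using ref slot by (auto simp: refines_def b_advance_def advance_def)
qed

lemma refines_bstep:
  assumes ref: "refines K b s"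
  shows "refines K (bstep K \<rho> m b y) (wstep K \<rho> m s y)"
proof -
  have "b_val b (b_newest b) = ck_val s (newest s)"
    using ref buffer_holdsD[of K "newest s" "b_val b" "ck_val s" "newest s"]
    by (simp add: refines_def)
  moreover have "b_acc (b_tick b y) = acc (tick s y)"
    using ref by (simp add: refines_def b_tick_def)
  ultimately show ?thesis
    using refines_restart[OF ref] refines_tick[OF ref] refines_push refines_advance
    by (simp add: bstep_def wstep_def Let_def)
qed

lemma bout_refines:
  assumes ref: "refines K b s"
  shows "bout m b = wout m s"
proof -
  have "b_time b (b_cur b) = real (ck_time s (cur s))" "b_val b (b_cur b) = ck_val s (cur s)"
    using ref buffer_holdsD[of K "newest s" "b_time b" "real \<circ> ck_time s" "cur s"]
      buffer_holdsD[of K "newest s" "b_val b" "ck_val s" "cur s"]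
    by (auto simp: refines_def)
  then show ?thesis
    using ref by (simp add: refines_def bout_def wout_def flip: of_nat_add)
qed

section \<open>The machine program\<close>

text \<open>Instructions 0--8 read the input, update the product and decide whether to push a
  checkpoint; 9--23 push; 24--35 advance \<open>cur\<close>; 36--43 produce the output; 44--54 restart
  after a zero input.  Cells 13--16 of the memory are scratch registers.\<close>

definition prog :: "instr list" where
  "prog =
    [Add 0 0 5, Input 13, JmpLe 13 6 44, Mul 1 1 13, Add 14 2 11, Load 15 14, Mul 15 15 7,
     JmpLe 1 15 9, Jmp 24,
     Add 2 2 5, JmpLe 9 2 12, Jmp 13, Copy 2 10, Store 2 0, Add 14 2 11, Store 14 1,
     JmpLe 12 4 19, Add 4 4 5, Jmp 24, Add 3 3 5, JmpLe 9 3 22, Jmp 24, Copy 3 10, Jmp 24,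
     JmpLe 5 4 26, Jmp 36, Add 14 3 5, JmpLe 9 14 29, Jmp 30, Copy 14 10, Load 15 14,
     Add 15 15 8, JmpLe 15 0 34, Jmp 36, Copy 3 14, Sub 4 4 5,
     Load 15 3, Add 15 15 8, JmpLe 15 0 40, HaltNo, Add 14 3 11, Load 15 14, Div 16 1 15,
     HaltNum 16,
     Copy 1 5, Add 2 2 5, JmpLe 9 2 48, Jmp 49, Copy 2 10, Store 2 0, Add 14 2 11, Store 14 1,
     Copy 3 2, Copy 4 6, HaltNo]"

lemma length_prog [simp]: "length prog = 55"
  by (simp add: prog_def)

lemmas nth_prog = fun_cong[OF arg_cong[of _ _ nth, OF prog_def]]

definition layout :: "nat \<Rightarrow> real \<Rightarrow> nat \<Rightarrow> real list \<Rightarrow> bstate \<Rightarrow> bool" where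
  "layout K \<rho> m M b \<longleftrightarrow>
     length M = 17 + 2 * K \<and> b_newest b < K \<and> b_cur b < K \<and>
     rd M 0 = real (b_clock b) \<and> rd M 1 = b_acc b \<and> rd M 2 = 17 + real (b_newest b) \<and>
     rd M 3 = 17 + real (b_cur b) \<and> rd M 4 = real (b_gap b) \<and>
     rd M 5 = 1 \<and> rd M 6 = 0 \<and> rd M 7 = \<rho> \<and> rd M 8 = real m \<and> rd M 9 = 17 + real K \<and>
     rd M 10 = 17 \<and> rd M 11 = real K \<and> rd M 12 = real K - 1 \<and>
     (\<forall>i<K. rd M (17 + i) = b_time b i \<and> rd M (17 + K + i) = b_val b i)"

lemma rd_update [simp]: "rd (M[i := v]) j = (if i = j \<and> i < length M then v else rd M j)"
  by (auto simp: rd_def)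

lemma addr_of_nat [simp]: "addr (real n) = n"
  by (simp add: addr_def)

lemma addr_numeral [simp]: "addr (numeral k) = numeral k"
  by (simp add: addr_def)

lemma addr_add_of_nat [simp]: "0 \<le> r \<Longrightarrow> addr (r + real n) = addr r + n"
  by (simp add: addr_def nat_add_distrib)

lemma addr_add_one [simp]: "0 \<le> r \<Longrightarrow> addr (r + 1) = addr r + 1"
  using addr_add_of_nat[of r 1] by simp

lemma addr_numeral_add [simp]: "0 \<le> r \<Longrightarrow> addr (numeral k + r) = numeral k + addr r"
  by (simp add: addr_def nat_add_distrib)

text \<open>Rules for symbolic execution: they unfold \<open>exec\<close> only at literal program counters
  outside \<open>C\<close>, so that the simplifier stops at the entry of another block and splits a
  conditional jump before executing past it.\<close>

lemma exec_numeral_guarded: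
  "pc \<notin> C \<Longrightarrow> exec P x (numeral w) pc M = exec P x (Suc (pred_numeral w)) pc M"
  by (simp add: numeral_eq_Suc)

lemmas exec_until =
  exec_numeral_guarded[unfolded exec.simps(2), of "numeral k" for k]
  exec_numeral_guarded[unfolded exec.simps(2), of 0]
  exec_numeral_guarded[unfolded exec.simps(2), of "Suc 0"]

lemma exec_mono: "exec P x n pc M = Some r \<Longrightarrow> n \<le> n' \<Longrightarrow> exec P x n' pc M = Some r"
proof (induction n arbitrary: n' pc M)
  case (Suc n)
  then obtain n'' where "n' = Suc n''" "n \<le> n''"
    by (cases n') auto
  with Suc show ?case
    by (auto split: if_splits instr.splits)
qed simp

lemma layout_scratch [simp]:
  "j \<in> {13, 14, 15, 16} \<Longrightarrow> layout K \<rho> m (M[j := v]) b = layout K \<rho> m M b"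
  unfolding layout_def by (auto simp del: rd_update simp add: rd_def nth_list_update)

lemma layout_rd:
  assumes "layout K \<rho> m M b"
  shows "length M = 17 + 2 * K" "b_newest b < K" "b_cur b < K"
    "rd M 0 = real (b_clock b)" "rd M (Suc 0) = b_acc b" "rd M 2 = 17 + real (b_newest b)"
    "rd M 3 = 17 + real (b_cur b)" "rd M 4 = real (b_gap b)"
    "rd M 5 = 1" "rd M 6 = 0" "rd M 7 = \<rho>" "rd M 8 = real m" "rd M 9 = 17 + real K"
    "rd M 10 = 17" "rd M 11 = real K" "rd M 12 = real K - 1"
    "rd M 17 = b_time b 0" "rd M (17 + K) = b_val b 0"
    "rd M (17 + b_newest b) = b_time b (b_newest b)"
    "rd M (17 + b_newest b + K) = b_val b (b_newest b)"
    "rd M (17 + b_cur b) = b_time b (b_cur b)"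
    "rd M (17 + b_cur b + K) = b_val b (b_cur b)"
    "Suc (b_cur b) < K \<Longrightarrow> rd M (18 + b_cur b) = b_time b (Suc (b_cur b))"
  using assms by (auto simp: layout_def ac_simps)

lemma exec_output:
  assumes lay: "layout K \<rho> m M b" and "8 \<le> n"
  shows "\<exists>M'. exec prog x n 36 M = Some (M', bout m b) \<and> layout K \<rho> m M' b"
proof -
  have "\<exists>M'. exec prog x 8 36 M = Some (M', bout m b) \<and> layout K \<rho> m M' b"
    using layout_rd[OF lay] lay
    by (simp add: exec_until[where C = "{}"] nth_prog bout_def)
  then show ?thesis using exec_mono assms(2) by blast
qed

lemma exec_advance:
  assumes lay: "layout K \<rho> m M b" and "20 \<le> n"
  shows "\<exists>M'. exec prog x n 24 M = Some (M', bout m (b_advance K m b)) \<and>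
    layout K \<rho> m M' (b_advance K m b)"
proof -
  have "\<exists>M'. exec prog x 20 24 M = Some (M', bout m (b_advance K m b)) \<and>
      layout K \<rho> m M' (b_advance K m b)"
    using layout_rd[OF lay] lay
    by - (cases "1 \<le> b_gap b"; cases "Suc (b_cur b) = K";
        cases "b_time b (next_slot K (b_cur b)) + real m \<le> real (b_clock b)";
        simp add: exec_until[where C = "{36}"] nth_prog b_advance_def next_slot_def;
        rule exec_output; simp add: layout_def)
  then show ?thesis
    using exec_mono \<open>20 \<le> n\<close> by blast
qed

lemma exec_push:
  assumes lay: "layout K \<rho> m M b" and "40 \<le> n"
  shows "\<exists>M'. exec prog x n 9 M = Some (M', bout m (b_advance K m (b_push K b))) \<and>
    layout K \<rho> m M' (b_advance K m (b_push K b))"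
proof -
  have "\<exists>M'. exec prog x 40 9 M = Some (M', bout m (b_advance K m (b_push K b))) \<and>
      layout K \<rho> m M' (b_advance K m (b_push K b))"
    using layout_rd[OF lay] lay
    by - (cases "Suc (b_newest b) = K"; cases "K \<le> Suc (b_gap b)"; cases "Suc (b_cur b) = K";
        simp add: exec_until[where C = "{24}"] nth_prog b_push_def Let_def next_slot_def;
        rule exec_advance; simp add: layout_def)
  then show ?thesis
    using exec_mono \<open>40 \<le> n\<close> by blast
qed

lemma exec_step:
  assumes lay: "layout K \<rho> m M b" and "1 \<le> m"
  shows "\<exists>M'. exec prog y 60 0 M = Some (M', bout m (bstep K \<rho> m b y)) \<and>
    layout K \<rho> m M' (bstep K \<rho> m b y)"
proof (cases "y \<le> 0")
  case True
  text \<open>The restart path halts with \<open>OutNo\<close> directly; this is the output of the new state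
    because its only checkpoint is younger than \<open>m \<ge> 1\<close>.\<close>
  then show ?thesis
    using layout_rd[OF lay] lay \<open>1 \<le> m\<close>
    by - (cases "Suc (b_newest b) = K";
        simp add: exec_until[where C = "{}"] numeral_2_eq_2[symmetric] nth_prog
          bstep_def b_restart_def next_slot_def bout_def layout_def)
next
  case False
  then show ?thesis
    using layout_rd[OF lay] lay
    by - (cases "b_acc b * y \<le> b_val b (b_newest b) * \<rho>";
        simp add: exec_until[where C = "{9, 24}"] numeral_2_eq_2[symmetric] nth_prog
          bstep_def b_tick_def;
        (rule exec_push | rule exec_advance); simp add: layout_def)
qed

section \<open>Correctness of the program\<close>

definition init_mem :: "nat \<Rightarrow> real \<Rightarrow> nat \<Rightarrow> real list" where
  "init_mem K \<rho> m =
     [0, 1, 17, 17, 0, 1, 0, \<rho>, real m, 17 + real K, 17, real K, real K - 1, 0, 0, 0, 0]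
     @ replicate K 0 @ replicate K 1"

definition binit :: bstate where
  "binit = \<lparr>b_clock = 0, b_acc = 1, b_newest = 0, b_cur = 0, b_gap = 0,
     b_time = \<lambda>_. 0, b_val = \<lambda>_. 1\<rparr>"

lemma length_init_mem: "length (init_mem K \<rho> m) = 17 + 2 * K"
  by (simp add: init_mem_def)

lemma layout_init_mem: "0 < K \<Longrightarrow> layout K \<rho> m (init_mem K \<rho> m) binit"
  by (auto simp: layout_def init_mem_def binit_def rd_def nth_append)

lemma refines_init: "0 < K \<Longrightarrow> refines K binit winit"
  by (simp add: refines_def binit_def winit_def buffer_holds_def)

lemma run_prog:
  assumes "1 \<le> m" "0 < K"
  shows "\<exists>M b. run prog 60 (init_mem K \<rho> m) x q =
      Some (M, if q = 0 then OutNo else wout m (wrun K \<rho> m x q)) \<and>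
    layout K \<rho> m M b \<and> refines K b (wrun K \<rho> m x q)"
proof (induction q)
  case 0
  then show ?case
    using layout_init_mem[OF \<open>0 < K\<close>] refines_init[OF \<open>0 < K\<close>] by auto
next
  case (Suc q)
  then obtain M b where run: "run prog 60 (init_mem K \<rho> m) x q =
      Some (M, if q = 0 then OutNo else wout m (wrun K \<rho> m x q))"
    and lay: "layout K \<rho> m M b" and ref: "refines K b (wrun K \<rho> m x q)"
    by blast
  obtain M' where "exec prog (x (Suc q)) 60 0 M = Some (M', bout m (bstep K \<rho> m b (x (Suc q))))"
    and "layout K \<rho> m M' (bstep K \<rho> m b (x (Suc q)))"
    using exec_step[OF lay \<open>1 \<le> m\<close>] by blast
  moreover have "refines K (bstep K \<rho> m b (x (Suc q))) (wrun K \<rho> m x (Suc q))"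
    using refines_bstep[OF ref] by simp
  ultimately show ?case
    using run bout_refines by fastforce
qed

lemma run_prog_output:
  assumes bnd: "\<forall>i\<ge>1. 0 \<le> x i \<and> x i \<le> 1" and "0 \<le> \<rho>" "\<rho> < 1" "0 < K" "1 \<le> m" "m \<le> q"
  defines "W \<equiv> \<Prod>i\<in>{q - m + 1..q}. x i"
  shows "case snd (the (run prog 60 (init_mem K \<rho> m) x q)) of
      OutNum v \<Rightarrow> \<rho> * W \<le> v \<and> v \<le> W
    | OutNo \<Rightarrow> W \<le> \<rho> ^ (K - 1)"
proof -
  have W: "W = seg_prod x (q - m) q"
    by (simp add: W_def seg_prod_def atLeastSucAtMost_greaterThanAtMost)
  have "snd (the (run prog 60 (init_mem K \<rho> m) x q)) = wout m (wrun K \<rho> m x q)"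
    using run_prog[OF \<open>1 \<le> m\<close> \<open>0 < K\<close>, of \<rho> x q] \<open>1 \<le> m\<close> \<open>m \<le> q\<close> by auto
  then show ?thesis
    unfolding W using wout_wrun[OF bnd \<open>0 \<le> \<rho>\<close> \<open>\<rho> < 1\<close> \<open>0 < K\<close> \<open>m \<le> q\<close>] by simp
qed

lemma power_le_inverse_of_log:
  fixes \<rho> z :: real
  assumes "0 < \<rho>" "\<rho> < 1" "0 < z" "log (1 / \<rho>) z \<le> real n"
  shows "\<rho> ^ n \<le> 1 / z"
proof -
  have "\<rho> ^ n = \<rho> powr real n"
    using assms(1) by (simp add: powr_realpow)
  also have "\<dots> \<le> \<rho> powr log (1 / \<rho>) z"
    using assms by (intro powr_mono') auto
  also have "\<dots> = inverse ((1 / \<rho>) powr log (1 / \<rho>) z)"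
    using assms(1) inverse_powr[of "1 / \<rho>"] by simp
  also have "\<dots> = 1 / z"
    using assms by (simp add: inverse_eq_divide)
  finally show ?thesis .
qed

lemma buffer_size:
  fixes \<rho> z :: real
  assumes "0 < \<rho>" "\<rho> < 1" "1 < z"
  defines "K \<equiv> nat \<lceil>log (1 / \<rho>) z\<rceil> + 2"
  shows "\<rho> ^ (K - 1) \<le> \<rho> / z" and "real (17 + 2 * K) \<le> 60 * max 1 (log (1 / \<rho>) z)"
proof -
  have "\<rho> ^ nat \<lceil>log (1 / \<rho>) z\<rceil> \<le> 1 / z"
    using assms real_nat_ceiling_ge by (intro power_le_inverse_of_log) auto
  then have "\<rho> * \<rho> ^ nat \<lceil>log (1 / \<rho>) z\<rceil> \<le> \<rho> * (1 / z)"
    using \<open>0 < \<rho>\<close> by (intro mult_left_mono) auto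
  then show "\<rho> ^ (K - 1) \<le> \<rho> / z"
    by (simp add: K_def)
  have "0 < log (1 / \<rho>) z"
    using assms by simp
  then show "real (17 + 2 * K) \<le> 60 * max 1 (log (1 / \<rho>) z)"
    unfolding K_def by simp linarith
qed

theorem lemma1:
  shows "\<exists>C::real. \<forall>(\<epsilon>::real) (z::real) (m::nat).
    0 < \<epsilon> \<longrightarrow> \<epsilon> < 1 \<longrightarrow> z > 1 \<longrightarrow> m \<ge> 1 \<longrightarrow>
    (\<exists>(P::instr list) (M0::real list) (T::nat).
       real (length M0) \<le> C * max 1 (log (1 / (1 - \<epsilon>)) z) \<and>
       real T \<le> C \<and>
       (\<forall>xs::nat \<Rightarrow> real. (\<forall>i\<ge>1. 0 \<le> xs i \<and> xs i \<le> 1) \<longrightarrow>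
          (\<forall>q. run P T M0 xs q \<noteq> None) \<and>
          (\<forall>q\<ge>m. let W = (\<Prod>i\<in>{q - m + 1..q}. xs i) in
             (case snd (the (run P T M0 xs q)) of
                OutNum v \<Rightarrow> (1 - \<epsilon>) * W \<le> v \<and> v \<le> W
              | OutNo \<Rightarrow> W \<le> (1 - \<epsilon>) / z))))"
proof (intro exI[of _ 60] allI impI, goal_cases)
  case (1 \<epsilon> z m)
  define \<rho> where "\<rho> = 1 - \<epsilon>"
  define K where "K = nat \<lceil>log (1 / \<rho>) z\<rceil> + 2"
  have \<rho>: "0 < \<rho>" "\<rho> < 1"
    using 1 by (simp_all add: \<rho>_def)
  note budget = buffer_size[OF \<rho> \<open>1 < z\<close>, folded K_def]
  show ?case
  proof (intro exI[of _ prog] exI[of _ "init_mem K \<rho> m"] exI[of _ 60] conjI allI impI, goal_cases)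
    case 1
    then show ?case using budget(2) by (simp add: length_init_mem \<rho>_def)
  next
    case (3 xs q)
    then show ?case using run_prog[OF \<open>1 \<le> m\<close>, of K \<rho> xs q] by (auto simp: K_def)
  next
    case (4 xs q)
    then show ?case
      using run_prog_output[OF _ _ \<open>\<rho> < 1\<close> _ \<open>1 \<le> m\<close>, of xs K q] budget(1) \<rho>
      by (auto simp: K_def \<rho>_def Let_def split: out.splits)
  qed simp
qed

end
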